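(* Let $I,J\subseteq\mathbb{R}$ be non-degenerate, bounded, closed intervals. For every $n\in\omega$ let $x_n$ be points of the interior of $I$, pairwise distinct, and let $A_n\subseteq J$ be dense in $J$. Then there exists an increasing bijection $f\colon I\to J$ such that $f(x_n)\in A_n$ for all $n\in\omega$. *)

theory Defs
  imports "HOL-Analysis.Analysis"
begin

end

theory Submission
  imports Defs
begin

(*
  Start from the increasing affine homeomorphism G_0 of [a,b] onto [c,d], with inverse H_0.
  At stage n the point G_n(x_n) lies in (c,d) and differs from the finitely many values G_n(x_k),
  k < n.  As A_n is dense, an increasing homeomorphism phi of the line supported in a tiny interval
  around G_n(x_n), avoiding those values, moves G_n(x_n) into A_n.  Then G_(n+1) = phi o G_n and
  H_(n+1) = H_n o phi^-1 differ from G_n and H_n by at most 2^-n (for H_n by uniform continuity),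
  and G_(n+1)(x_k) = G_n(x_k) for k < n.  So G_n and H_n converge uniformly to continuous maps
  g and h, which are mutually inverse because each pair G_n, H_n is; g is increasing as a limit of
  increasing maps, and g(x_k) = G_(k+1)(x_k) lies in A_k since the value at x_k never changes again.
*)

lemma homeomorphism_of_support_subset:
  assumes hom: "homeomorphism UNIV UNIV f g" and supp: "{x. \<not> (f x = x \<and> g x = x)} \<subseteq> U"
  shows "homeomorphism U U f g"
proof
  have gf: "g (f x) = x" and fg: "f (g x) = x" for x
    using hom by (auto simp: homeomorphism_def)
  have fixed: "f v = v" "g v = v" if "v \<notin> U" for v
    using supp that by blast+
  show "continuous_on U f" "continuous_on U g"
    using hom by (auto simp: homeomorphism_def intro: continuous_on_subset)
  show "f ` U \<subseteq> U"
  proof (rule image_subsetI, rule ccontr)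
    fix u assume "u \<in> U" "f u \<notin> U"
    then show False
      using gf[of u] fixed(2)[of "f u"] by simp
  qed
  show "g ` U \<subseteq> U"
  proof (rule image_subsetI, rule ccontr)
    fix u assume "u \<in> U" "g u \<notin> U"
    then show False
      using fg[of u] fixed(1)[of "g u"] by simp
  qed
  show "g (f x) = x" "f (g x) = x" for x
    using gf fg .
qed

lemma homeomorphism_displacement_less:
  fixes f g :: "real \<Rightarrow> real"
  assumes hom: "homeomorphism UNIV UNIV f g"
    and supp: "{x. \<not> (f x = x \<and> g x = x)} \<subseteq> {l<..<r}" and "l < r"
  shows "\<bar>f t - t\<bar> < r - l"
proof (cases "t \<in> {l<..<r}")
  case True
  have "f ` {l<..<r} = {l<..<r}"
    using homeomorphism_of_support_subset[OF hom supp] by (simp add: homeomorphism_def)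
  with True have "f t \<in> {l<..<r}"
    by blast
  with True show ?thesis
    by auto
next
  case False
  then have "f t = t"
    using supp by blast
  then show ?thesis
    using \<open>l < r\<close> by simp
qed

lemma homeomorphism_fixing_two_points_strict_mono:
  fixes f g :: "real \<Rightarrow> real"
  assumes hom: "homeomorphism UNIV UNIV f g" and "p < q" "f p = p" "f q = q"
  shows "strict_mono f"
proof -
  have "inj f"
    using hom by (metis homeomorphism_def inj_on_inverseI UNIV_I)
  moreover have "continuous_on UNIV f"
    using hom by (simp add: homeomorphism_def)
  ultimately have "strict_mono f \<or> strict_antimono_on UNIV f"
    using injective_eq_monotone_map[of UNIV f] by simp
  moreover have "\<not> strict_antimono_on UNIV f"
    using assms(2-4) unfolding monotone_on_def by (metis UNIV_I less_asym)
  ultimately show ?thesis by blast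
qed

lemma real_homeomorphism_moving_point:
  fixes l r w y :: real
  assumes "w \<in> {l<..<r}" "y \<in> {l<..<r}"
  obtains f g where "homeomorphism UNIV UNIV f g" "f w = y" "strict_mono f"
    "{x. \<not> (f x = x \<and> g x = x)} \<subseteq> {l<..<r}"
proof -
  have hull: "affine hull {l<..<r} = UNIV"
    using assms by (intro affine_hull_open) auto
  then have "openin (top_of_set (affine hull {l<..<r})) {l<..<r}"
    by (simp flip: open_openin)
  then obtain f g where hom: "homeomorphism UNIV UNIV f g" and "f w = y"
    and supp: "{x. \<not> (f x = x \<and> g x = x)} \<subseteq> {l<..<r}"
    by (rule homeomorphism_moving_point[where T = UNIV and a = w and b = y]) (use assms hull in auto)
  moreover have "strict_mono f"
    using supp assms by (intro homeomorphism_fixing_two_points_strict_mono[OF hom, of l r]) auto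
  ultimately show ?thesis using that by blast
qed

lemma increasing_affine_homeomorphism:
  fixes a b c d :: real
  assumes "a < b" "c < d"
  defines "G \<equiv> \<lambda>t. c + (t - a) * (d - c) / (b - a)"
  shows "homeomorphism {a..b} {c..d} G (\<lambda>s. a + (s - c) * (b - a) / (d - c))"
    and "mono_on {a..b} G"
proof -
  have affine_in: "p' + (t - p) * (q' - p') / (q - p) \<in> {p'..q'}"
    if "t \<in> {p..q}" "p < q" "p' < q'" for p q p' q' t :: real
  proof -
    have "(t - p) * (q' - p') / (q - p) \<le> (q - p) * (q' - p') / (q - p)"
      using that by (intro divide_right_mono mult_right_mono) auto
    moreover have "0 \<le> (t - p) * (q' - p') / (q - p)"
      using that by simp
    ultimately show ?thesis
      using that by simp
  qed
  show "homeomorphism {a..b} {c..d} G (\<lambda>s. a + (s - c) * (b - a) / (d - c))"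
  proof (rule homeomorphismI)
    show "continuous_on {a..b} G" "continuous_on {c..d} (\<lambda>s. a + (s - c) * (b - a) / (d - c))"
      unfolding G_def using assms by (auto intro!: continuous_intros)
    show "G ` {a..b} \<subseteq> {c..d}" "(\<lambda>s. a + (s - c) * (b - a) / (d - c)) ` {c..d} \<subseteq> {a..b}"
      using assms affine_in[of _ a b c d] affine_in[of _ c d a b] by (auto simp: G_def)
    show "a + (G t - c) * (b - a) / (d - c) = t" "G (a + (s - c) * (b - a) / (d - c)) = s" for s t
      using assms by (simp_all add: G_def)
  qed
  show "mono_on {a..b} G"
    using assms by (intro mono_onI) (auto simp: G_def intro!: divide_right_mono mult_right_mono)
qed

lemma uniformly_convergent_on_summable_steps:
  fixes F :: "nat \<Rightarrow> 'a \<Rightarrow> 'b::banach"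
  assumes "\<And>n x. x \<in> S \<Longrightarrow> norm (F (Suc n) x - F n x) \<le> M n" and "summable M"
  shows "uniformly_convergent_on S F"
proof -
  have "uniform_limit S (\<lambda>n x. \<Sum>i<n. F (Suc i) x - F i x) (\<lambda>x. \<Sum>i. F (Suc i) x - F i x) sequentially"
    using assms by (rule Weierstrass_m_test)
  then have "uniform_limit S (\<lambda>n x. F 0 x + (\<Sum>i<n. F (Suc i) x - F i x))
      (\<lambda>x. F 0 x + (\<Sum>i. F (Suc i) x - F i x)) sequentially"
    by (intro uniform_limit_add uniform_limit_const)
  moreover have "(\<lambda>n x. F 0 x + (\<Sum>i<n. F (Suc i) x - F i x)) = F"
    using sum_lessThan_telescope[of "\<lambda>i. F i _"] by (simp add: fun_eq_iff)
  ultimately show ?thesis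
    unfolding uniformly_convergent_on_def by auto
qed

lemma uniform_limits_of_right_inverses:
  fixes G :: "nat \<Rightarrow> 'a::metric_space \<Rightarrow> 'b::metric_space" and H :: "nat \<Rightarrow> 'b \<Rightarrow> 'a"
  assumes G: "uniform_limit S G g sequentially" and H: "uniform_limit T H h sequentially"
    and "continuous_on S g" "closed S"
    and H_in: "\<And>n y. y \<in> T \<Longrightarrow> H n y \<in> S" and GH: "\<And>n y. y \<in> T \<Longrightarrow> G n (H n y) = y"
    and "y \<in> T"
  shows "g (h y) = y"
proof (rule LIMSEQ_unique)
  have lim_H: "(\<lambda>n. H n y) \<longlonglongrightarrow> h y"
    using H \<open>y \<in> T\<close> by (rule tendsto_uniform_limitI)
  moreover have "h y \<in> S"
    by (rule Lim_in_closed_set[OF \<open>closed S\<close> _ _ lim_H]) (use H_in \<open>y \<in> T\<close> in auto)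
  ultimately show "(\<lambda>n. g (H n y)) \<longlonglongrightarrow> g (h y)"
    by (rule continuous_on_tendsto_compose[OF \<open>continuous_on S g\<close>]) (use H_in \<open>y \<in> T\<close> in auto)
  show "(\<lambda>n. g (H n y)) \<longlonglongrightarrow> y"
  proof (rule tendstoI)
    fix e :: real assume "e > 0"
    with G have "\<forall>\<^sub>F n in sequentially. \<forall>x\<in>S. dist (G n x) (g x) < e"
      by (simp add: uniform_limit_iff)
    then show "\<forall>\<^sub>F n in sequentially. dist (g (H n y)) y < e"
    proof eventually_elim
      case (elim n)
      then have "dist (G n (H n y)) (g (H n y)) < e"
        using H_in \<open>y \<in> T\<close> by blast
      then show ?case
        using GH \<open>y \<in> T\<close> by (simp add: dist_commute)
    qed
  qed
qed

lemma mono_on_limit: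
  fixes F :: "nat \<Rightarrow> 'a::order \<Rightarrow> 'b::linorder_topology"
  assumes "\<And>n. mono_on S (F n)" and "\<And>x. x \<in> S \<Longrightarrow> (\<lambda>n. F n x) \<longlonglongrightarrow> f x"
  shows "mono_on S f"
proof (rule mono_onI)
  fix x y assume "x \<in> S" "y \<in> S" "x \<le> y"
  then show "f x \<le> f y"
    using assms by (intro LIMSEQ_le[of "\<lambda>n. F n x" _ "\<lambda>n. F n y"]) (auto dest: mono_onD)
qed

lemma mono_homeomorphism_strict_mono_on:
  fixes g :: "'a::{linorder,topological_space} \<Rightarrow> 'b::{linorder,topological_space}"
  assumes "homeomorphism S T g h" and "mono_on S g"
  shows "strict_mono_on S g"
proof (rule mono_imp_strict_mono[OF assms(2)])
  show "inj_on g S"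
    using assms(1) by (intro inj_on_inverseI[of S h]) (auto simp: homeomorphism_def)
qed

lemma limit_of_increasing_homeomorphisms:
  fixes G H :: "nat \<Rightarrow> real \<Rightarrow> real"
  assumes hom: "\<And>n. homeomorphism S T (G n) (H n)" and mono: "\<And>n. mono_on S (G n)"
    and "closed S" "closed T"
    and G_step: "\<And>n t. t \<in> S \<Longrightarrow> \<bar>G (Suc n) t - G n t\<bar> \<le> M n"
    and H_step: "\<And>n s. s \<in> T \<Longrightarrow> \<bar>H (Suc n) s - H n s\<bar> \<le> M n"
    and "summable M"
  obtains g h where "homeomorphism S T g h" "mono_on S g"
    "\<And>t. t \<in> S \<Longrightarrow> (\<lambda>n. G n t) \<longlonglongrightarrow> g t"
proof -
  obtain g where g: "uniform_limit S G g sequentially"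
    using uniformly_convergent_on_summable_steps[of S G M] G_step \<open>summable M\<close>
    by (auto simp: uniformly_convergent_on_def)
  obtain h where h: "uniform_limit T H h sequentially"
    using uniformly_convergent_on_summable_steps[of T H M] H_step \<open>summable M\<close>
    by (auto simp: uniformly_convergent_on_def)
  have G_maps: "G n t \<in> T" "H n (G n t) = t" if "t \<in> S" for n t
    using hom[of n] that by (auto simp: homeomorphism_def)
  have H_maps: "H n s \<in> S" "G n (H n s) = s" if "s \<in> T" for n s
    using hom[of n] that by (auto simp: homeomorphism_def)
  have cont_g: "continuous_on S g"
    by (rule uniform_limit_theorem[OF _ g]) (use hom in \<open>auto simp: homeomorphism_def\<close>)
  have cont_h: "continuous_on T h"
    by (rule uniform_limit_theorem[OF _ h]) (use hom in \<open>auto simp: homeomorphism_def\<close>)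
  have lim_g: "(\<lambda>n. G n t) \<longlonglongrightarrow> g t" if "t \<in> S" for t
    using g that by (rule tendsto_uniform_limitI)
  have lim_h: "(\<lambda>n. H n s) \<longlonglongrightarrow> h s" if "s \<in> T" for s
    using h that by (rule tendsto_uniform_limitI)
  have "homeomorphism S T g h"
  proof (rule homeomorphismI[OF cont_g cont_h])
    show "g ` S \<subseteq> T"
    proof (rule image_subsetI)
      show "g t \<in> T" if "t \<in> S" for t
        by (rule Lim_in_closed_set[OF \<open>closed T\<close> _ _ lim_g]) (use G_maps that in auto)
    qed
    show "h ` T \<subseteq> S"
    proof (rule image_subsetI)
      show "h s \<in> S" if "s \<in> T" for s
        by (rule Lim_in_closed_set[OF \<open>closed S\<close> _ _ lim_h]) (use H_maps that in auto)
    qed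
    show "h (g t) = t" if "t \<in> S" for t
      by (rule uniform_limits_of_right_inverses[OF h g cont_h \<open>closed T\<close>]) (use G_maps that in auto)
    show "g (h s) = s" if "s \<in> T" for s
      by (rule uniform_limits_of_right_inverses[OF g h cont_g \<open>closed S\<close>]) (use H_maps that in auto)
  qed
  moreover have "mono_on S g"
    using mono lim_g by (rule mono_on_limit)
  ultimately show ?thesis
    using that lim_g by blast
qed

lemma increasing_homeomorphism_interior:
  fixes G H :: "real \<Rightarrow> real"
  assumes hom: "homeomorphism {a..b} {c..d} G H" and mono: "mono_on {a..b} G"
    and x: "x \<in> {a<..<b}"
  shows "G x \<in> {c<..<d}"
proof -
  have "strict_mono_on {a..b} G"
    using hom mono by (rule mono_homeomorphism_strict_mono_on)
  then have "G a < G x" "G x < G b"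
    using strict_mono_onD[of "{a..b}" G a x] strict_mono_onD[of "{a..b}" G x b] x by auto
  moreover have "G a \<in> {c..d}" "G b \<in> {c..d}"
    using hom x by (auto simp: homeomorphism_def)
  ultimately show ?thesis
    by simp
qed

lemma increasing_homeomorphism_moving_point_into_dense:
  fixes w \<eta> :: real
  assumes "{c..d} \<subseteq> closure A" and "\<eta> > 0" "c \<le> w - \<eta>" "w + \<eta> \<le> d"
  obtains \<phi> \<psi> where "homeomorphism {c..d} {c..d} \<phi> \<psi>" "strict_mono \<phi>" "\<phi> w \<in> A"
    "\<And>s. s \<notin> {w - \<eta><..<w + \<eta>} \<Longrightarrow> \<phi> s = s"
    "\<And>s. \<bar>\<phi> s - s\<bar> < 2 * \<eta>" "\<And>s. \<bar>\<psi> s - s\<bar> < 2 * \<eta>"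
proof -
  have "w \<in> closure A"
    using assms by auto
  then obtain y where "y \<in> A" and y: "dist y w < \<eta>"
    using \<open>\<eta> > 0\<close> unfolding closure_approachable by blast
  obtain \<phi> \<psi> where hom: "homeomorphism UNIV UNIV \<phi> \<psi>" and "\<phi> w = y" and "strict_mono \<phi>"
    and supp: "{s. \<not> (\<phi> s = s \<and> \<psi> s = s)} \<subseteq> {w - \<eta><..<w + \<eta>}"
    by (rule real_homeomorphism_moving_point[of w "w - \<eta>" "w + \<eta>" y])
      (use \<open>\<eta> > 0\<close> y in \<open>auto simp: dist_real_def\<close>)
  have "{s. \<not> (\<phi> s = s \<and> \<psi> s = s)} \<subseteq> {c..d}"
    using supp assms(3,4) by auto
  then have "homeomorphism {c..d} {c..d} \<phi> \<psi>"
    by (rule homeomorphism_of_support_subset[OF hom])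
  moreover have supp': "{s. \<not> (\<psi> s = s \<and> \<phi> s = s)} \<subseteq> {w - \<eta><..<w + \<eta>}"
    using supp by blast
  have "\<bar>\<phi> s - s\<bar> < 2 * \<eta>" "\<bar>\<psi> s - s\<bar> < 2 * \<eta>" for s
    using homeomorphism_displacement_less[OF hom supp, of s]
      homeomorphism_displacement_less[OF homeomorphism_symD[OF hom] supp', of s] \<open>\<eta> > 0\<close>
    by simp_all
  moreover have "\<phi> s = s" if "s \<notin> {w - \<eta><..<w + \<eta>}" for s
    using supp that by blast
  ultimately show ?thesis
    using that \<open>strict_mono \<phi>\<close> \<open>\<phi> w = y\<close> \<open>y \<in> A\<close> by blast
qed

lemma perturb_increasing_homeomorphism:
  fixes G H :: "real \<Rightarrow> real"
  assumes hom: "homeomorphism {a..b} {c..d} G H" and mono: "mono_on {a..b} G"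
    and x: "x \<in> {a<..<b}" and X: "finite X" "X \<subseteq> {a..b}" "x \<notin> X"
    and dense: "{c..d} \<subseteq> closure A" and "e > 0"
  obtains G' H' where "homeomorphism {a..b} {c..d} G' H'" "mono_on {a..b} G'" "G' x \<in> A"
    "\<And>t. t \<in> X \<Longrightarrow> G' t = G t"
    "\<And>t. t \<in> {a..b} \<Longrightarrow> \<bar>G' t - G t\<bar> \<le> e" "\<And>s. s \<in> {c..d} \<Longrightarrow> \<bar>H' s - H s\<bar> \<le> e"
proof -
  define w where "w = G x"
  have w: "w \<in> {c<..<d}"
    unfolding w_def using hom mono x by (rule increasing_homeomorphism_interior)
  have "continuous_on {c..d} H"
    using hom by (simp add: homeomorphism_def)
  then have uc: "uniformly_continuous_on {c..d} H"
    by (rule compact_uniformly_continuous) simp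
  obtain \<delta> where "\<delta> > 0"
    and \<delta>: "\<And>s s'. s \<in> {c..d} \<Longrightarrow> s' \<in> {c..d} \<Longrightarrow> dist s' s < \<delta> \<Longrightarrow> dist (H s') (H s) < e"
    using uniformly_continuous_onE[OF uc \<open>e > 0\<close>] by blast
  have "inj_on G {a..b}"
    using hom by (intro inj_on_inverseI[of _ H]) (auto simp: homeomorphism_def)
  then have "w \<notin> G ` X"
    using X x by (auto simp: w_def inj_on_image_mem_iff)
  obtain \<rho> where "\<rho> > 0" and \<rho>: "\<forall>v\<in>G ` X. v \<noteq> w \<longrightarrow> \<rho> \<le> dist w v"
    using finite_set_avoid[of "G ` X" w] \<open>finite X\<close> by blast
  define \<eta> where "\<eta> = min (min \<rho> \<delta>) (min e (min (w - c) (d - w))) / 2"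
  have "\<eta> > 0" "2 * \<eta> \<le> \<delta>" "2 * \<eta> \<le> e" "\<eta> \<le> \<rho>" "c \<le> w - \<eta>" "w + \<eta> \<le> d"
    using \<open>\<rho> > 0\<close> \<open>\<delta> > 0\<close> \<open>e > 0\<close> w by (auto simp: \<eta>_def min_def field_simps)
  then obtain \<phi> \<psi> where hom_\<phi>: "homeomorphism {c..d} {c..d} \<phi> \<psi>" and "strict_mono \<phi>" "\<phi> w \<in> A"
    and fixed: "\<And>s. s \<notin> {w - \<eta><..<w + \<eta>} \<Longrightarrow> \<phi> s = s"
    and \<phi>_close: "\<And>s. \<bar>\<phi> s - s\<bar> < 2 * \<eta>" and \<psi>_close: "\<And>s. \<bar>\<psi> s - s\<bar> < 2 * \<eta>"
    using increasing_homeomorphism_moving_point_into_dense[OF dense] by blast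
  show ?thesis
  proof
    show "homeomorphism {a..b} {c..d} (\<phi> \<circ> G) (H \<circ> \<psi>)"
      using hom hom_\<phi> by (rule homeomorphism_compose)
    show "mono_on {a..b} (\<phi> \<circ> G)"
      using mono \<open>strict_mono \<phi>\<close> by (auto simp: mono_on_def strict_mono_less_eq)
    show "(\<phi> \<circ> G) x \<in> A"
      using \<open>\<phi> w \<in> A\<close> by (simp add: w_def)
    show "(\<phi> \<circ> G) t = G t" if "t \<in> X" for t
      using \<rho> \<open>w \<notin> G ` X\<close> that \<open>\<eta> \<le> \<rho>\<close> fixed[of "G t"] by (force simp: dist_real_def)
    show "\<bar>(\<phi> \<circ> G) t - G t\<bar> \<le> e" for t
      using \<phi>_close[of "G t"] \<open>2 * \<eta> \<le> e\<close> by simp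
    show "\<bar>(H \<circ> \<psi>) s - H s\<bar> \<le> e" if "s \<in> {c..d}" for s
    proof -
      have "\<psi> s \<in> {c..d}" and "dist (\<psi> s) s < \<delta>"
        using hom_\<phi> that \<psi>_close[of s] \<open>2 * \<eta> \<le> \<delta>\<close> by (auto simp: homeomorphism_def dist_real_def)
      then show ?thesis
        using \<delta>[OF _ that] by (force simp: dist_real_def)
    qed
  qed
qed

lemma limit_of_eventually_unchanged:
  fixes X :: "nat \<Rightarrow> 'a::t2_space"
  assumes "\<And>n. N \<le> n \<Longrightarrow> X (Suc n) = X n" and "X \<longlonglongrightarrow> l"
  shows "l = X N"
proof -
  have "X n = X N" if "N \<le> n" for n
    using that by (induction n rule: dec_induct) (simp_all add: assms(1))
  then have "X \<longlonglongrightarrow> X N"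
    by (intro tendsto_eventually eventually_sequentiallyI)
  with \<open>X \<longlonglongrightarrow> l\<close> show ?thesis
    by (rule LIMSEQ_unique)
qed

lemma approximating_increasing_homeomorphisms:
  fixes x :: "nat \<Rightarrow> real" and A :: "nat \<Rightarrow> real set"
  assumes "a < b" "c < d" and x: "\<And>n. x n \<in> {a<..<b}" and "inj x"
    and dense: "\<And>n. {c..d} \<subseteq> closure (A n)"
  obtains G H :: "nat \<Rightarrow> real \<Rightarrow> real" where
    "\<And>n. homeomorphism {a..b} {c..d} (G n) (H n)" "\<And>n. mono_on {a..b} (G n)"
    "\<And>n t. t \<in> {a..b} \<Longrightarrow> \<bar>G (Suc n) t - G n t\<bar> \<le> (1/2) ^ n"
    "\<And>n s. s \<in> {c..d} \<Longrightarrow> \<bar>H (Suc n) s - H n s\<bar> \<le> (1/2) ^ n"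
    "\<And>n k. k < n \<Longrightarrow> G (Suc n) (x k) = G n (x k)" "\<And>n. G (Suc n) (x n) \<in> A n"
proof -
  define P where "P n GH \<longleftrightarrow> homeomorphism {a..b} {c..d} (fst GH) (snd GH) \<and> mono_on {a..b} (fst GH)"
    for n :: nat and GH :: "(real \<Rightarrow> real) \<times> (real \<Rightarrow> real)"
  define Q where "Q n GH GH' \<longleftrightarrow> (\<forall>k<n. fst GH' (x k) = fst GH (x k)) \<and> fst GH' (x n) \<in> A n
      \<and> (\<forall>t\<in>{a..b}. \<bar>fst GH' t - fst GH t\<bar> \<le> (1/2) ^ n)
      \<and> (\<forall>s\<in>{c..d}. \<bar>snd GH' s - snd GH s\<bar> \<le> (1/2) ^ n)"
    for n :: nat and GH GH' :: "(real \<Rightarrow> real) \<times> (real \<Rightarrow> real)"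
  have "\<exists>GH. P 0 GH"
    using increasing_affine_homeomorphism[OF \<open>a < b\<close> \<open>c < d\<close>] unfolding P_def by fastforce
  moreover have "\<exists>GH'. P (Suc n) GH' \<and> Q n GH GH'" if "P n GH" for n GH
  proof -
    have hom: "homeomorphism {a..b} {c..d} (fst GH) (snd GH)"
      and mono: "mono_on {a..b} (fst GH)"
      using that by (simp_all add: P_def)
    have "x ` {..<n} \<subseteq> {a..b}"
    proof (rule image_subsetI)
      show "x k \<in> {a..b}" for k
        using x[of k] by simp
    qed
    moreover have "x n \<notin> x ` {..<n}"
      using \<open>inj x\<close> by (auto dest: injD)
    moreover have "(0::real) < (1/2) ^ n"
      by simp
    ultimately obtain G' H' where "homeomorphism {a..b} {c..d} G' H'" "mono_on {a..b} G'"
      "G' (x n) \<in> A n" "\<And>t. t \<in> x ` {..<n} \<Longrightarrow> G' t = fst GH t"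
      "\<And>t. t \<in> {a..b} \<Longrightarrow> \<bar>G' t - fst GH t\<bar> \<le> (1/2) ^ n"
      "\<And>s. s \<in> {c..d} \<Longrightarrow> \<bar>H' s - snd GH s\<bar> \<le> (1/2) ^ n"
      using perturb_increasing_homeomorphism[OF hom mono x[of n] finite_imageI[OF finite_lessThan]
          _ _ dense[of n]] by blast
    then have "P (Suc n) (G', H') \<and> Q n GH (G', H')"
      unfolding P_def Q_def by auto
    then show ?thesis ..
  qed
  ultimately obtain GH where GH: "\<And>n. P n (GH n) \<and> Q n (GH n) (GH (Suc n))"
    using dependent_nat_choice[of P Q] by blast
  define G where "G n = fst (GH n)" for n
  define H where "H n = snd (GH n)" for n
  show ?thesis
  proof
    show "homeomorphism {a..b} {c..d} (G n) (H n)" "mono_on {a..b} (G n)" for n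
      using GH[of n] by (simp_all add: P_def G_def H_def)
    show "\<bar>G (Suc n) t - G n t\<bar> \<le> (1/2) ^ n" if "t \<in> {a..b}" for n t
      using GH[of n] that by (simp add: Q_def G_def)
    show "\<bar>H (Suc n) s - H n s\<bar> \<le> (1/2) ^ n" if "s \<in> {c..d}" for n s
      using GH[of n] that by (simp add: Q_def H_def)
    show "G (Suc n) (x k) = G n (x k)" if "k < n" for n k
      using GH[of n] that by (simp add: Q_def G_def)
    show "G (Suc n) (x n) \<in> A n" for n
      using GH[of n] by (simp add: Q_def G_def)
  qed
qed

theorem lemma2p4:
  fixes a b c d :: real
    and x :: "nat \<Rightarrow> real"
    and A :: "nat \<Rightarrow> real set"
  assumes "a < b" and "c < d"
    and "\<And>n. x n \<in> {a<..<b}"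
    and "inj x"
    and "\<And>n. A n \<subseteq> {c..d}"
    and "\<And>n. {c..d} \<subseteq> closure (A n)"
  shows "\<exists>f. bij_betw f {a..b} {c..d} \<and> strict_mono_on {a..b} f \<and> (\<forall>n. f (x n) \<in> A n)"
proof -
  obtain G H where hom: "\<And>n. homeomorphism {a..b} {c..d} (G n) (H n)"
    and mono: "\<And>n. mono_on {a..b} (G n)"
    and G_step: "\<And>n t. t \<in> {a..b} \<Longrightarrow> \<bar>G (Suc n) t - G n t\<bar> \<le> (1/2) ^ n"
    and H_step: "\<And>n s. s \<in> {c..d} \<Longrightarrow> \<bar>H (Suc n) s - H n s\<bar> \<le> (1/2) ^ n"
    and unchanged: "\<And>n k. k < n \<Longrightarrow> G (Suc n) (x k) = G n (x k)"
    and in_A: "\<And>n. G (Suc n) (x n) \<in> A n"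
    using approximating_increasing_homeomorphisms[of a b c d x A] assms by blast
  obtain g h where hom_g: "homeomorphism {a..b} {c..d} g h" and "mono_on {a..b} g"
    and lim: "\<And>t. t \<in> {a..b} \<Longrightarrow> (\<lambda>n. G n t) \<longlonglongrightarrow> g t"
    using limit_of_increasing_homeomorphisms[OF hom mono _ _ G_step H_step summable_geometric]
    by auto
  have "bij_betw g {a..b} {c..d}"
    using hom_g by (auto simp: homeomorphism_def intro!: bij_betw_byWitness[where f' = h])
  moreover have "strict_mono_on {a..b} g"
    using hom_g \<open>mono_on {a..b} g\<close> by (rule mono_homeomorphism_strict_mono_on)
  moreover have "g (x k) \<in> A k" for k
  proof -
    have "g (x k) = G (Suc k) (x k)"
      by (rule limit_of_eventually_unchanged[of "Suc k" "\<lambda>n. G n (x k)"])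
        (use unchanged lim[of "x k"] assms(3)[of k] in auto)
    with in_A show ?thesis
      by simp
  qed
  ultimately show ?thesis
    by blast
qed

end
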